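(* Let $\mathcal{B}=(T,\bowtie)$ be a block and $(B_1,\dots,B_k)$ a legal partition of $T$ with $k$ sets. Then the schedule $\mathcal S=\mathrm{LevelSchedule}(B_1,\dots,B_k)$ satisfies $\mathrm{Depth}((T,\mathcal S))\le k$, where $\mathrm{Depth}$ is the maximum number of vertices on a directed path.
   Context: A block consists of a finite set $T$ of transactions with a symmetric irreflexive conflict relation $\bowtie$. A set is conflict-free if no two elements conflict; a legal partition of $T$ is an ordered sequence of pairwise disjoint conflict-free sets with union $T$. $\mathrm{LevelSchedule}(B_1,\dots,B_k)$: set $B_0=\emptyset$, $\mathcal S=\emptyset$; for $i=1,\dots,k$ and, for each $i$, for $j=i-1,\dots,0$ (decreasing): let $E=\{(u,v)\in B_j\times B_i: u\bowtie v\}$, let $P$ be the set of pairs $(x,y)$ with a directed path from $x$ to $y$ in the current directed graph $(T,\mathcal S)$, and set $\mathcal S\leftarrow\mathcal S\cup(E\setminus P)$; output $\mathcal S$. *)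

theory Defs
  imports Main
begin

definition conflict_free :: "('a \<Rightarrow> 'a \<Rightarrow> bool) \<Rightarrow> 'a set \<Rightarrow> bool" where
  "conflict_free R A = (\<forall>x\<in>A. \<forall>y\<in>A. \<not> R x y)"

definition legal_partition :: "'a set \<Rightarrow> ('a \<Rightarrow> 'a \<Rightarrow> bool) \<Rightarrow> 'a set list \<Rightarrow> bool" where
  "legal_partition T R Bs =
     ((\<forall>i<length Bs. conflict_free R (Bs ! i)) \<and>
      (\<forall>i<length Bs. \<forall>j<length Bs. i \<noteq> j \<longrightarrow> Bs ! i \<inter> Bs ! j = {}) \<and>
      \<Union>(set Bs) = T)"

text \<open>Level i of the partition, 1-based, with B_0 = {}.\<close>
definition level :: "'a set list \<Rightarrow> nat \<Rightarrow> 'a set" where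
  "level Bs i = (if i = 0 then {} else Bs ! (i - 1))"

definition ls_step :: "('a \<Rightarrow> 'a \<Rightarrow> bool) \<Rightarrow> 'a set list \<Rightarrow> nat \<times> nat \<Rightarrow> ('a \<times> 'a) set \<Rightarrow> ('a \<times> 'a) set" where
  "ls_step R Bs ij S =
     (let E = {(u, v). u \<in> level Bs (snd ij) \<and> v \<in> level Bs (fst ij) \<and> R u v}
      in S \<union> (E - S\<^sup>+))"

definition ls_order :: "nat \<Rightarrow> (nat \<times> nat) list" where
  "ls_order k = concat (map (\<lambda>i. map (\<lambda>j. (i, j)) (rev [0..<i])) [1..<k + 1])"

definition LevelSchedule :: "('a \<Rightarrow> 'a \<Rightarrow> bool) \<Rightarrow> 'a set list \<Rightarrow> ('a \<times> 'a) set" where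
  "LevelSchedule R Bs = fold (ls_step R Bs) (ls_order (length Bs)) {}"

definition is_dpath :: "'a set \<Rightarrow> ('a \<times> 'a) set \<Rightarrow> 'a list \<Rightarrow> bool" where
  "is_dpath T S xs = (xs \<noteq> [] \<and> distinct xs \<and> set xs \<subseteq> T \<and>
      (\<forall>i. Suc i < length xs \<longrightarrow> (xs ! i, xs ! Suc i) \<in> S))"

text \<open>Depth: maximum number of vertices on a directed path (0 for the empty graph).\<close>
definition Depth :: "'a set \<Rightarrow> ('a \<times> 'a) set \<Rightarrow> nat" where
  "Depth T S = Sup {length xs | xs. is_dpath T S xs}"

end

theory Submission
  imports Defs
begin

text \<open>Every edge added by LevelSchedule joins a vertex of some B_j to a vertex of some B_i
  with j < i. Numbering each vertex by the block containing it therefore gives a map into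
  {0..<k} that strictly increases along every edge, so a directed path visits at most k vertices.
  Only disjointness and covering of the partition enter.\<close>

lemma dpath_rank_ge_index:
  assumes path: "is_dpath T S xs"
    and rank_mono: "\<And>u v. (u, v) \<in> S \<Longrightarrow> u \<in> T \<Longrightarrow> v \<in> T \<Longrightarrow> f u < f v"
    and "m < length xs"
  shows "m \<le> f (xs ! m)"
  using \<open>m < length xs\<close>
proof (induction m)
  case 0
  then show ?case by simp
next
  case (Suc m)
  have "(xs ! m, xs ! Suc m) \<in> S" "xs ! m \<in> T" "xs ! Suc m \<in> T"
    using path Suc.prems unfolding is_dpath_def by (auto dest: nth_mem)
  then have "f (xs ! m) < f (xs ! Suc m)" by (rule rank_mono)
  with Suc show ?case by simp
qed

lemma Depth_le_rank_bound:
  fixes f :: "'a \<Rightarrow> nat"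
  assumes rank_bound: "\<And>x. x \<in> T \<Longrightarrow> f x < k"
    and rank_mono: "\<And>u v. (u, v) \<in> S \<Longrightarrow> u \<in> T \<Longrightarrow> v \<in> T \<Longrightarrow> f u < f v"
  shows "Depth T S \<le> k"
proof -
  have "length xs \<le> k" if path: "is_dpath T S xs" for xs
  proof -
    have "xs \<noteq> []" "last xs \<in> T" using path unfolding is_dpath_def by auto
    then have "length xs - 1 \<le> f (last xs)" "f (last xs) < k"
      using dpath_rank_ge_index[where m = "length xs - 1", OF path rank_mono] rank_bound
      by (auto simp: last_conv_nth)
    then show ?thesis by linarith
  qed
  then show ?thesis
    unfolding Depth_def by (cases "{length xs |xs. is_dpath T S xs} = {}") (auto intro!: cSup_least)
qed

lemma ls_order_pairs: "(i, j) \<in> set (ls_order k) \<Longrightarrow> j < i \<and> i \<le> k"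
  unfolding ls_order_def by auto

lemma ls_step_subset: "ls_step R Bs (i, j) S \<subseteq> S \<union> level Bs j \<times> level Bs i"
  unfolding ls_step_def by auto

lemma fold_ls_step_subset:
  "fold (ls_step R Bs) ps S \<subseteq> S \<union> (\<Union>(i, j) \<in> set ps. level Bs j \<times> level Bs i)"
proof (induction ps arbitrary: S)
  case Nil
  then show ?case by simp
next
  case (Cons p ps)
  obtain i j where "p = (i, j)" by fastforce
  with Cons.IH[of "ls_step R Bs p S"] ls_step_subset[of R Bs i j S] show ?case by auto
qed

lemma LevelSchedule_edge_levels:
  assumes "(u, v) \<in> LevelSchedule R Bs"
  obtains i j where "j < i" "i < length Bs" "u \<in> Bs ! j" "v \<in> Bs ! i"
proof -
  obtain i j where ij: "(i, j) \<in> set (ls_order (length Bs))" "u \<in> level Bs j" "v \<in> level Bs i"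
    using assms fold_ls_step_subset[of R Bs "ls_order (length Bs)" "{}"]
    unfolding LevelSchedule_def by blast
  have "0 < j" using ij(2) by (simp add: level_def split: if_splits)
  moreover have "j < i" "i \<le> length Bs" using ls_order_pairs[OF ij(1)] by simp_all
  ultimately show thesis using ij
    by (intro that[of "j - 1" "i - 1"]) (auto simp: level_def)
qed

definition block_index :: "'a set list \<Rightarrow> 'a \<Rightarrow> nat" where
  "block_index Bs x = (THE i. i < length Bs \<and> x \<in> Bs ! i)"

lemma block_index_eq:
  assumes "legal_partition T R Bs" "i < length Bs" "x \<in> Bs ! i"
  shows "block_index Bs x = i"
  unfolding block_index_def
proof (rule the_equality)
  show "i < length Bs \<and> x \<in> Bs ! i" using assms(2,3) ..
  show "j = i" if "j < length Bs \<and> x \<in> Bs ! j" for j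
    using assms that unfolding legal_partition_def by blast
qed

lemma block_index_less:
  assumes "legal_partition T R Bs" "x \<in> T"
  shows "block_index Bs x < length Bs"
proof -
  obtain i where "i < length Bs" "x \<in> Bs ! i"
    using assms unfolding legal_partition_def by (auto simp: in_set_conv_nth)
  with block_index_eq[OF assms(1)] show ?thesis by simp
qed

theorem lemma8:
  fixes T :: "'a set" and R :: "'a \<Rightarrow> 'a \<Rightarrow> bool" and Bs :: "'a set list"
  assumes "finite T"
    and "symp R" and "irreflp R"
    and "legal_partition T R Bs"
  shows "Depth T (LevelSchedule R Bs) \<le> length Bs"
proof (rule Depth_le_rank_bound)
  show "block_index Bs x < length Bs" if "x \<in> T" for x
    using block_index_less[OF assms(4) that] .
  show "block_index Bs u < block_index Bs v" if "(u, v) \<in> LevelSchedule R Bs" for u v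
    using that
  proof (rule LevelSchedule_edge_levels)
    fix i j assume "j < i" "i < length Bs" "u \<in> Bs ! j" "v \<in> Bs ! i"
    then have "block_index Bs u = j" "block_index Bs v = i"
      using block_index_eq[OF assms(4)] by auto
    with \<open>j < i\<close> show ?thesis by simp
  qed
qed

end
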